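(* Let $P$ be the Petersen graph on vertex set $\{1,\dots,10\}$ with edges $12,23,34,45,51$ (outer pentagon), $16,27,38,49,5\,10$ (spokes), and $68,8\,10,10\,7,79,96$ (inner pentagram). Let $X$ be the graph on $\{1,\dots,10\}$ with the 15 edges $\{10,1\},\{1,3\},\{3,4\},\{4,9\},\{9,6\},\{6,8\},\{8,5\},\{5,2\},\{2,7\},\{7,10\}$ (a Hamilton cycle) together with $\{2,8\},\{3,10\},\{4,5\},\{1,6\},\{7,9\}$. Then $KC(P)\cong G(10,3)$ and $KC(X)\cong G(10,3)$, while $X$ is not isomorphic to $P$. Thus the Desargues graph $G(10,3)$ is the Kronecker cover of two non-isomorphic simple graphs.
   Context: For a simple graph $G$, the Kronecker cover $KC(G)$ is the graph with vertex set $V(G)\times\{0,1\}$ in which $(u,a)$ is adjacent to $(v,b)$ if and only if $uv\in E(G)$ and $a\neq b$. The generalized Petersen graph $G(n,k)$ has vertices $u_0,\dots,u_{n-1},v_0,\dots,v_{n-1}$ and edges $u_iu_{i+1}$, $u_iv_i$ and $v_iv_{i+k}$, with indices taken mod $n$. $G(10,3)$ is the Desargues graph and $G(5,2)$ is the Petersen graph. The graph $X$ arises as follows: it has edges $\{i,\alpha(j)\}$ for each edge $ij$ of $P$, where $\alpha=(1\,8)(2\,10)(3\,5)$ is an involutive automorphism of $P$ fixing $4,6,7,9$. *)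

theory Defs
  imports Main
begin

definition simple_graph :: "'a set \<Rightarrow> 'a set set \<Rightarrow> bool" where
  "simple_graph V E \<longleftrightarrow> (\<forall>e\<in>E. \<exists>u v. u \<noteq> v \<and> u \<in> V \<and> v \<in> V \<and> e = {u, v})"

definition graph_iso :: "'a set \<Rightarrow> 'a set set \<Rightarrow> 'b set \<Rightarrow> 'b set set \<Rightarrow> bool" where
  "graph_iso V E W F \<longleftrightarrow>
     (\<exists>f. bij_betw f V W \<and> (\<forall>u\<in>V. \<forall>v\<in>V. {u, v} \<in> E \<longleftrightarrow> {f u, f v} \<in> F))"

definition kc_verts :: "'a set \<Rightarrow> ('a \<times> bool) set" where
  "kc_verts V = V \<times> UNIV"

definition kc_edges :: "'a set set \<Rightarrow> ('a \<times> bool) set set" where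
  "kc_edges E = {{(u, a), (v, b)} | u v a b. {u, v} \<in> E \<and> a \<noteq> b}"

text \<open>Generalized Petersen graph G(n,k): (False,i) is u_i, (True,i) is v_i, 0 \<le> i < n.\<close>

definition gp_verts :: "nat \<Rightarrow> (bool \<times> nat) set" where
  "gp_verts n = UNIV \<times> {..<n}"

definition gp_edges :: "nat \<Rightarrow> nat \<Rightarrow> (bool \<times> nat) set set" where
  "gp_edges n k =
     {{(False, i), (False, (i + 1) mod n)} | i. i < n} \<union>
     {{(False, i), (True, i)} | i. i < n} \<union>
     {{(True, i), (True, (i + k) mod n)} | i. i < n}"

definition ten :: "nat set" where "ten = {1..10}"

definition petersen_edges :: "nat set set" where
  "petersen_edges = {{1,2},{2,3},{3,4},{4,5},{5,1},
                     {1,6},{2,7},{3,8},{4,9},{5,10},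
                     {6,8},{8,10},{10,7},{7,9},{9,6}}"

definition X_edges :: "nat set set" where
  "X_edges = {{10,1},{1,3},{3,4},{4,9},{9,6},{6,8},{8,5},{5,2},{2,7},{7,10},
              {2,8},{3,10},{4,5},{1,6},{7,9}}"

end

theory Submission
  imports Defs
begin

text \<open>Labelling the outer pentagon \<open>1..5\<close> and the pentagram \<open>6..10\<close> exhibits \<open>P\<close> as \<open>G(5,2)\<close>.
  For odd \<open>n\<close> the Chinese remainder theorem \<open>\<int>/2n \<cong> \<int>/n \<times> \<int>/2\<close> identifies \<open>KC(G(n,k))\<close>
  with \<open>G(2n,k')\<close>, where \<open>k'\<close> is the odd one of \<open>k, k + n\<close>; here \<open>G(10,7) = G(10,3)\<close>.
  \<open>X\<close> is the twist of \<open>P\<close> by the involutive automorphism \<open>\<alpha>\<close>, and \<open>(u,a) \<mapsto> (\<alpha>\<^sup>a u, a)\<close>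
  identifies \<open>KC(X)\<close> with \<open>KC(P)\<close>. Finally \<open>X\<close> contains the triangle \<open>1, 3, 10\<close> whereas \<open>P\<close> is
  triangle-free.\<close>

lemma simple_graph_iff_card: "simple_graph V E \<longleftrightarrow> (\<forall>e\<in>E. card e = 2 \<and> e \<subseteq> V)"
  unfolding simple_graph_def card_2_iff by (intro ball_cong refl) auto

lemma graph_isoI_inverse:
  assumes "f ` V \<subseteq> W" "g ` W \<subseteq> V"
    and "\<forall>x\<in>V. g (f x) = x" "\<forall>y\<in>W. f (g y) = y"
    and "\<forall>e\<in>E. f ` e \<in> F" "\<forall>e\<in>F. g ` e \<in> E"
  shows "graph_iso V E W F"
  unfolding graph_iso_def
proof (intro exI conjI ballI iffI)
  show "bij_betw f V W" using assms(1-4) by (intro bij_betw_byWitness)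
next
  fix u v assume "{u, v} \<in> E"
  then show "{f u, f v} \<in> F" using assms(5) by force
next
  fix u v assume "u \<in> V" "v \<in> V" "{f u, f v} \<in> F"
  then have "g ` {f u, f v} \<in> E" using assms(6) by blast
  then show "{u, v} \<in> E" using \<open>u \<in> V\<close> \<open>v \<in> V\<close> assms(3) by simp
qed

lemma graph_iso_trans:
  assumes "graph_iso U D V E" "graph_iso V E W F"
  shows "graph_iso U D W F"
proof -
  obtain f where f: "bij_betw f U V" "\<forall>u\<in>U. \<forall>v\<in>U. {u, v} \<in> D \<longleftrightarrow> {f u, f v} \<in> E"
    using assms(1) unfolding graph_iso_def by blast
  obtain g where g: "bij_betw g V W" "\<forall>u\<in>V. \<forall>v\<in>V. {u, v} \<in> E \<longleftrightarrow> {g u, g v} \<in> F"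
    using assms(2) unfolding graph_iso_def by blast
  show ?thesis unfolding graph_iso_def
  proof (intro exI conjI ballI)
    show "bij_betw (g \<circ> f) U W" using f(1) g(1) by (rule bij_betw_trans)
  next
    fix u v assume "u \<in> U" "v \<in> U"
    moreover from this have "f u \<in> V" "f v \<in> V" using f(1) bij_betwE by blast+
    ultimately show "{u, v} \<in> D \<longleftrightarrow> {(g \<circ> f) u, (g \<circ> f) v} \<in> F" using f(2) g(2) by simp
  qed
qed

definition triangle_free :: "'a set \<Rightarrow> 'a set set \<Rightarrow> bool" where
  "triangle_free V E \<longleftrightarrow>
     (\<forall>u\<in>V. \<forall>v\<in>V. \<forall>w\<in>V. \<not> ({u, v} \<in> E \<and> {v, w} \<in> E \<and> {u, w} \<in> E))"

lemma graph_iso_triangle_free: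
  assumes "graph_iso V E W F" "triangle_free W F"
  shows "triangle_free V E"
proof -
  obtain f where f: "bij_betw f V W" "\<forall>u\<in>V. \<forall>v\<in>V. {u, v} \<in> E \<longleftrightarrow> {f u, f v} \<in> F"
    using assms(1) unfolding graph_iso_def by blast
  have fW: "f u \<in> W" if "u \<in> V" for u using f(1) that bij_betwE by blast
  show ?thesis unfolding triangle_free_def
  proof (intro ballI notI)
    fix u v w assume "u \<in> V" "v \<in> V" "w \<in> V" "{u, v} \<in> E \<and> {v, w} \<in> E \<and> {u, w} \<in> E"
    then have "{f u, f v} \<in> F \<and> {f v, f w} \<in> F \<and> {f u, f w} \<in> F" using f(2) by blast
    with assms(2) fW \<open>u \<in> V\<close> \<open>v \<in> V\<close> \<open>w \<in> V\<close> show False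
      unfolding triangle_free_def by blast
  qed
qed

lemma kc_edges_mem_iff: "{(u, a), (v, b)} \<in> kc_edges E \<longleftrightarrow> {u, v} \<in> E \<and> a \<noteq> b"
  unfolding kc_edges_def by (auto simp: doubleton_eq_iff insert_commute)

lemma kc_edges_Un: "kc_edges (E \<union> F) = kc_edges E \<union> kc_edges F"
  unfolding kc_edges_def by (simp add: set_eq_iff conj_disj_distribL conj_disj_distribR ex_disj_distrib)

lemma kc_edges_doubletons:
  "kc_edges {{p i, q i} | i. C i} = {{(p i, a), (q i, \<not> a)} | i a. C i}"
proof (intro equalityI subsetI)
  fix e assume "e \<in> kc_edges {{p i, q i} | i. C i}"
  then obtain u v a b i where e: "e = {(u, a), (v, b)}" "a \<noteq> b" "C i" "{u, v} = {p i, q i}"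
    unfolding kc_edges_def by blast
  then have "e = {(p i, a), (q i, \<not> a)} \<or> e = {(p i, \<not> a), (q i, \<not> \<not> a)}"
    by (auto simp: doubleton_eq_iff insert_commute)
  with \<open>C i\<close> show "e \<in> {{(p i, a), (q i, \<not> a)} | i a. C i}" by blast
qed (auto simp: kc_edges_def)

lemma graph_iso_kc:
  assumes "graph_iso V E W F"
  shows "graph_iso (kc_verts V) (kc_edges E) (kc_verts W) (kc_edges F)"
proof -
  obtain f where f: "bij_betw f V W" "\<forall>u\<in>V. \<forall>v\<in>V. {u, v} \<in> E \<longleftrightarrow> {f u, f v} \<in> F"
    using assms unfolding graph_iso_def by blast
  have "bij_betw (map_prod f id) (kc_verts V) (kc_verts W)"
    unfolding kc_verts_def using f(1) bij_betw_id by (rule bij_betw_map_prod)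
  moreover have "{x, y} \<in> kc_edges E \<longleftrightarrow> {map_prod f id x, map_prod f id y} \<in> kc_edges F"
    if "x \<in> kc_verts V" "y \<in> kc_verts V" for x y
    using that f(2) by (cases x; cases y) (auto simp: kc_verts_def kc_edges_mem_iff)
  ultimately show ?thesis unfolding graph_iso_def by blast
qed

definition twisted_edges :: "('a \<Rightarrow> 'a) \<Rightarrow> 'a set set \<Rightarrow> 'a set set" where
  "twisted_edges \<sigma> E = {{u, \<sigma> v} | u v. {u, v} \<in> E}"

lemma twisted_edges_empty: "twisted_edges \<sigma> {} = {}"
  unfolding twisted_edges_def by simp

lemma twisted_edges_insert:
  "twisted_edges \<sigma> (insert {u, v} E) = insert {u, \<sigma> v} (insert {v, \<sigma> u} (twisted_edges \<sigma> E))"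
  unfolding twisted_edges_def by (auto simp: doubleton_eq_iff)

lemma twisted_edges_iff:
  assumes "simple_graph V E" "\<forall>x\<in>V. \<sigma> (\<sigma> x) = x" "\<forall>e\<in>E. \<sigma> ` e \<in> E"
    and "u \<in> V" "v \<in> V"
  shows "{u, v} \<in> twisted_edges \<sigma> E \<longleftrightarrow> {u, \<sigma> v} \<in> E"
proof
  assume "{u, v} \<in> twisted_edges \<sigma> E"
  then obtain p q where pq: "{u, v} = {p, \<sigma> q}" "{p, q} \<in> E"
    unfolding twisted_edges_def by blast
  then have "q \<in> V" using assms(1) unfolding simple_graph_def by (metis doubleton_eq_iff)
  from pq(1) consider "u = p" "v = \<sigma> q" | "u = \<sigma> q" "v = p" by (auto simp: doubleton_eq_iff)
  then show "{u, \<sigma> v} \<in> E"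
  proof cases
    case 1
    then show ?thesis using pq(2) assms(2) \<open>q \<in> V\<close> by simp
  next
    case 2
    then show ?thesis using assms(3) pq(2) by (force simp: insert_commute)
  qed
next
  assume "{u, \<sigma> v} \<in> E"
  then show "{u, v} \<in> twisted_edges \<sigma> E"
    unfolding twisted_edges_def using assms(2) \<open>v \<in> V\<close> by force
qed

lemma graph_iso_kc_twisted_edges:
  assumes "simple_graph V E" "\<sigma> ` V \<subseteq> V" "\<forall>x\<in>V. \<sigma> (\<sigma> x) = x" "\<forall>e\<in>E. \<sigma> ` e \<in> E"
  shows "graph_iso (kc_verts V) (kc_edges (twisted_edges \<sigma> E)) (kc_verts V) (kc_edges E)"
proof -
  define \<phi> where "\<phi> = (\<lambda>(u, a). (if a then \<sigma> u else u, a :: bool))"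
  have "\<phi> ` kc_verts V \<subseteq> kc_verts V" "\<forall>x\<in>kc_verts V. \<phi> (\<phi> x) = x"
    using assms(2,3) by (auto simp: \<phi>_def kc_verts_def)
  then have "bij_betw \<phi> (kc_verts V) (kc_verts V)" by (intro bij_betw_byWitness)
  moreover have "{(u, a), (v, b)} \<in> kc_edges (twisted_edges \<sigma> E) \<longleftrightarrow>
      {\<phi> (u, a), \<phi> (v, b)} \<in> kc_edges E" if "u \<in> V" "v \<in> V" for u v a b
  proof -
    have "{u, v} \<in> twisted_edges \<sigma> E \<longleftrightarrow> {u, \<sigma> v} \<in> E"
      "{v, u} \<in> twisted_edges \<sigma> E \<longleftrightarrow> {v, \<sigma> u} \<in> E"
      using twisted_edges_iff[OF assms(1,3,4)] that by blast+
    then show ?thesis by (cases a; cases b) (auto simp: \<phi>_def kc_edges_mem_iff insert_commute)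
  qed
  ultimately show ?thesis unfolding graph_iso_def kc_verts_def by blast
qed

lemma kc_gp_edges:
  "kc_edges (gp_edges n k) =
     {{((False, i), a), ((False, (i + 1) mod n), \<not> a)} | i a. i < n} \<union>
     {{((False, i), a), ((True, i), \<not> a)} | i a. i < n} \<union>
     {{((True, i), a), ((True, (i + k) mod n), \<not> a)} | i a. i < n}"
  unfolding gp_edges_def kc_edges_Un kc_edges_doubletons ..

lemma gp_edges_reflect:
  assumes "k \<le> n"
  shows "gp_edges n (n - k) = gp_edges n k"
proof -
  have "{{(True, i), (True, (i + (n - k)) mod n)} | i. i < n} =
        {{(True, i), (True, (i + k) mod n)} | i. i < n}" (is "?L = ?R")
  proof (intro equalityI subsetI)
    fix e assume "e \<in> ?L"
    then obtain i where "i < n" "e = {(True, i), (True, (i + (n - k)) mod n)}" by blast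
    moreover have "((i + (n - k)) mod n + k) mod n = i"
      using assms \<open>i < n\<close> by (simp add: mod_add_left_eq)
    ultimately show "e \<in> ?R"
      by (auto intro!: exI[of _ "(i + (n - k)) mod n"] simp: insert_commute)
  next
    fix e assume "e \<in> ?R"
    then obtain i where "i < n" "e = {(True, i), (True, (i + k) mod n)}" by blast
    moreover have "((i + k) mod n + (n - k)) mod n = (i + k + (n - k)) mod n"
      by (rule mod_add_left_eq)
    then have "((i + k) mod n + (n - k)) mod n = i"
      using assms \<open>i < n\<close> by simp
    ultimately show "e \<in> ?L"
      by (auto intro!: exI[of _ "(i + k) mod n"] simp: insert_commute)
  qed
  then show ?thesis unfolding gp_edges_def by simp
qed

text \<open>For odd \<open>n\<close> and \<open>i < n\<close>, \<open>parity_lift n i a\<close> is the unique \<open>x < 2 * n\<close> with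
  \<open>x mod n = i\<close> and \<open>odd x = a\<close>: the Chinese remainder isomorphism \<open>\<int>/2n \<cong> \<int>/n \<times> \<int>/2\<close>.\<close>

definition parity_lift :: "nat \<Rightarrow> nat \<Rightarrow> bool \<Rightarrow> nat" where
  "parity_lift n i a = (if odd i = a then i else i + n)"

lemma parity_lift_less: "i < n \<Longrightarrow> parity_lift n i a < 2 * n"
  unfolding parity_lift_def by simp

lemma parity_lift_mod: "i < n \<Longrightarrow> parity_lift n i a mod n = i"
  unfolding parity_lift_def by simp

lemma even_parity_lift: "odd n \<Longrightarrow> even (parity_lift n i a) \<longleftrightarrow> \<not> a"
  unfolding parity_lift_def by auto

lemma parity_lift_mod_odd:
  assumes "odd n" "x < 2 * n"
  shows "parity_lift n (x mod n) (odd x) = x"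
proof (cases "x < n")
  case False
  then have "x mod n = x - n" using assms(2) by (simp add: le_mod_geq)
  moreover have "odd (x - n) \<noteq> odd x" using False assms(1) by (simp add: even_diff_nat)
  ultimately show ?thesis using False unfolding parity_lift_def by simp
qed (simp add: parity_lift_def)

lemma mod_double_mod: "y mod (2 * n) mod n = y mod (n :: nat)"
  by (simp add: mod_mod_cancel)

lemma even_mod_double: "even (y mod (2 * n)) \<longleftrightarrow> even (y :: nat)"
  by (metis dvd_triv_left even_mod_2_iff mod_mod_cancel)

lemma parity_lift_add:
  assumes "odd n" "i < n"
  shows "parity_lift n ((i + d) mod n) (a \<noteq> odd d) = (parity_lift n i a + d) mod (2 * n)"
proof -
  let ?y = "(parity_lift n i a + d) mod (2 * n)"
  have "?y mod n = (i + d) mod n"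
    using assms(2) by (metis mod_add_left_eq mod_double_mod parity_lift_mod)
  moreover have "odd ?y = (a \<noteq> odd d)"
    using even_parity_lift[OF assms(1), of i a] by (auto simp: even_mod_double)
  moreover have "?y < 2 * n" using assms(1) by (simp add: odd_pos)
  ultimately show ?thesis using parity_lift_mod_odd[OF assms(1), of ?y] by simp
qed

text \<open>Inner vertices change sheet, so that spokes, which join opposite sheets, go to spokes.\<close>

definition gp_cover_map :: "nat \<Rightarrow> (bool \<times> nat) \<times> bool \<Rightarrow> bool \<times> nat" where
  "gp_cover_map n = (\<lambda>((t, i), a). (t, parity_lift n i (a \<noteq> t)))"

definition gp_cover_inv :: "nat \<Rightarrow> bool \<times> nat \<Rightarrow> (bool \<times> nat) \<times> bool" where
  "gp_cover_inv n = (\<lambda>(t, x). ((t, x mod n), odd x \<noteq> t))"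

lemma gp_cover_map_edges:
  assumes "odd n" "odd k'" "k' mod n = k mod n"
  shows "\<forall>e\<in>kc_edges (gp_edges n k). gp_cover_map n ` e \<in> gp_edges (2 * n) k'"
proof
  fix e assume "e \<in> kc_edges (gp_edges n k)"
  then consider
      (outer) i a where "i < n" "e = {((False, i), a), ((False, (i + 1) mod n), \<not> a)}"
    | (spoke) i a where "i < n" "e = {((False, i), a), ((True, i), \<not> a)}"
    | (inner) i a where "i < n" "e = {((True, i), a), ((True, (i + k) mod n), \<not> a)}"
    unfolding kc_gp_edges by blast
  then show "gp_cover_map n ` e \<in> gp_edges (2 * n) k'"
  proof cases
    case outer
    have "parity_lift n ((i + 1) mod n) (\<not> a) = (parity_lift n i a + 1) mod (2 * n)"
      using parity_lift_add[OF assms(1) outer(1), of 1 a] by simp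
    then show ?thesis using outer parity_lift_less[of i n a]
      unfolding gp_edges_def by (auto simp: gp_cover_map_def)
  next
    case spoke
    then show ?thesis using parity_lift_less[of i n a]
      unfolding gp_edges_def by (auto simp: gp_cover_map_def)
  next
    case inner
    have "(i + k') mod n = (i + k) mod n" using assms(3) by (metis mod_add_right_eq)
    then have "parity_lift n ((i + k) mod n) a = (parity_lift n i (\<not> a) + k') mod (2 * n)"
      using parity_lift_add[OF assms(1) inner(1), of k' "\<not> a"] assms(2) by simp
    then show ?thesis using inner parity_lift_less[of i n "\<not> a"]
      unfolding gp_edges_def by (auto simp: gp_cover_map_def)
  qed
qed

lemma gp_cover_inv_edges:
  assumes "odd n" "odd k'" "k' mod n = k mod n"
  shows "\<forall>e\<in>gp_edges (2 * n) k'. gp_cover_inv n ` e \<in> kc_edges (gp_edges n k)"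
proof
  fix e assume "e \<in> gp_edges (2 * n) k'"
  then consider
      (outer) x where "x < 2 * n" "e = {(False, x), (False, (x + 1) mod (2 * n))}"
    | (spoke) x where "x < 2 * n" "e = {(False, x), (True, x)}"
    | (inner) x where "x < 2 * n" "e = {(True, x), (True, (x + k') mod (2 * n))}"
    unfolding gp_edges_def by blast
  moreover have "n > 0" using assms(1) by (rule odd_pos)
  ultimately show "gp_cover_inv n ` e \<in> kc_edges (gp_edges n k)"
  proof cases
    case outer
    have "(x + 1) mod n = (x mod n + 1) mod n" by (rule mod_add_left_eq[symmetric])
    then show ?thesis using outer \<open>n > 0\<close>
      unfolding kc_gp_edges by (auto simp: gp_cover_inv_def mod_double_mod even_mod_double)
  next
    case spoke
    then show ?thesis using \<open>n > 0\<close>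
      unfolding kc_gp_edges by (auto simp: gp_cover_inv_def)
  next
    case inner
    have "(x + k') mod n = (x mod n + k) mod n" using assms(3) by (metis mod_add_eq mod_mod_trivial)
    then have "gp_cover_inv n ` e =
        {((True, x mod n), \<not> odd x), ((True, (x mod n + k) mod n), \<not> \<not> odd x)}"
      using inner assms(2) by (simp add: gp_cover_inv_def mod_double_mod even_mod_double)
    moreover have "x mod n < n" using \<open>n > 0\<close> by simp
    ultimately show ?thesis unfolding kc_gp_edges by blast
  qed
qed

lemma graph_iso_kc_gp_odd:
  assumes "odd n"
  shows "graph_iso (kc_verts (gp_verts n)) (kc_edges (gp_edges n k))
    (gp_verts (2 * n)) (gp_edges (2 * n) (if odd k then k else k + n))"
proof (rule graph_isoI_inverse)
  show "gp_cover_map n ` kc_verts (gp_verts n) \<subseteq> gp_verts (2 * n)"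
    by (auto simp: gp_cover_map_def kc_verts_def gp_verts_def parity_lift_less)
  show "gp_cover_inv n ` gp_verts (2 * n) \<subseteq> kc_verts (gp_verts n)"
    using odd_pos[OF assms] by (auto simp: gp_cover_inv_def kc_verts_def gp_verts_def)
  show "\<forall>x\<in>kc_verts (gp_verts n). gp_cover_inv n (gp_cover_map n x) = x"
    using assms by (auto simp: gp_cover_map_def gp_cover_inv_def kc_verts_def gp_verts_def
        parity_lift_mod even_parity_lift)
  show "\<forall>y\<in>gp_verts (2 * n). gp_cover_map n (gp_cover_inv n y) = y"
  proof
    fix y assume "y \<in> gp_verts (2 * n)"
    moreover obtain t x where "y = (t, x)" by fastforce
    moreover have "((odd x \<noteq> t) \<noteq> t) = odd x" by blast
    ultimately show "gp_cover_map n (gp_cover_inv n y) = y"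
      using parity_lift_mod_odd[OF assms]
      by (simp add: gp_cover_map_def gp_cover_inv_def gp_verts_def)
  qed
  let ?k' = "if odd k then k else k + n"
  have "odd ?k'" "?k' mod n = k mod n" using assms by auto
  then show "\<forall>e\<in>kc_edges (gp_edges n k). gp_cover_map n ` e \<in> gp_edges (2 * n) ?k'"
    "\<forall>e\<in>gp_edges (2 * n) ?k'. gp_cover_inv n ` e \<in> kc_edges (gp_edges n k)"
    using gp_cover_map_edges gp_cover_inv_edges assms by blast+
qed

lemma gp_edges_5_2:
  "gp_edges 5 2 =
     {{(False, 0), (False, 1)}, {(False, 1), (False, 2)}, {(False, 2), (False, 3)},
      {(False, 3), (False, 4)}, {(False, 4), (False, 0)},
      {(False, 0), (True, 0)}, {(False, 1), (True, 1)}, {(False, 2), (True, 2)},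
      {(False, 3), (True, 3)}, {(False, 4), (True, 4)},
      {(True, 0), (True, 2)}, {(True, 1), (True, 3)}, {(True, 2), (True, 4)},
      {(True, 3), (True, 0)}, {(True, 4), (True, 1)}}"
  unfolding gp_edges_def
  by (simp add: setcompr_eq_image lessThan_def[symmetric] lessThan_nat_numeral lessThan_Suc
      numeral_2_eq_2 insert_commute)

lemma ten_eq: "ten = {1, 2, 3, 4, 5, 6, 7, 8, 9, 10}"
  unfolding ten_def by (auto; presburger)

lemma simple_graph_petersen: "simple_graph ten petersen_edges"
  by (simp add: simple_graph_iff_card petersen_edges_def ten_eq)

lemma simple_graph_X: "simple_graph ten X_edges"
  by (simp add: simple_graph_iff_card X_edges_def ten_eq)

lemma graph_iso_petersen_gp_5_2: "graph_iso ten petersen_edges (gp_verts 5) (gp_edges 5 2)"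
proof (rule graph_isoI_inverse)
  define f :: "nat \<Rightarrow> bool \<times> nat" where "f k = (5 < k, (k - 1) mod 5)" for k
  define g :: "bool \<times> nat \<Rightarrow> nat" where "g = (\<lambda>(t, i). if t then i + 6 else i + 1)"
  show "f ` ten \<subseteq> gp_verts 5" by (auto simp: f_def gp_verts_def)
  show "g ` gp_verts 5 \<subseteq> ten" by (auto simp: g_def gp_verts_def ten_def)
  show "\<forall>k\<in>ten. g (f k) = k" by (simp add: f_def g_def ten_eq)
  show "\<forall>y\<in>gp_verts 5. f (g y) = y"
    by (simp add: f_def g_def gp_verts_def lessThan_nat_numeral lessThan_Suc UNIV_bool)
  show "\<forall>e\<in>petersen_edges. f ` e \<in> gp_edges 5 2"
    by (simp add: f_def petersen_edges_def gp_edges_5_2 insert_commute)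
  show "\<forall>e\<in>gp_edges 5 2. g ` e \<in> petersen_edges"
    by (simp add: g_def petersen_edges_def gp_edges_5_2 doubleton_eq_iff)
qed

lemma triangle_free_petersen: "triangle_free ten petersen_edges"
  unfolding triangle_free_def
proof (intro ballI notI, elim conjE)
  fix u v w
  assume "{u, v} \<in> petersen_edges" "{v, w} \<in> petersen_edges" "{u, w} \<in> petersen_edges"
  from this(1) show False
    unfolding petersen_edges_def insert_iff empty_iff doubleton_eq_iff
    by (elim disjE conjE; use \<open>{v, w} \<in> petersen_edges\<close> \<open>{u, w} \<in> petersen_edges\<close> in
        \<open>fastforce simp: petersen_edges_def doubleton_eq_iff\<close>)
qed

lemma not_triangle_free_X: "\<not> triangle_free ten X_edges"
proof -
  have "{1, 3} \<in> X_edges" "{3, 10} \<in> X_edges" "{1, 10} \<in> X_edges"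
    by (simp_all add: X_edges_def insert_commute)
  moreover have "1 \<in> ten" "3 \<in> ten" "10 \<in> ten" by (simp_all add: ten_def)
  ultimately show ?thesis unfolding triangle_free_def by blast
qed

definition petersen_involution :: "nat \<Rightarrow> nat" where
  "petersen_involution = id(1 := 8, 8 := 1, 2 := 10, 10 := 2, 3 := 5, 5 := 3)"

lemma X_edges_twisted: "X_edges = twisted_edges petersen_involution petersen_edges"
  by (simp add: X_edges_def petersen_edges_def twisted_edges_insert twisted_edges_empty
      petersen_involution_def insert_commute)

lemma graph_iso_kc_X_petersen:
  "graph_iso (kc_verts ten) (kc_edges X_edges) (kc_verts ten) (kc_edges petersen_edges)"
proof -
  have "petersen_involution ` ten \<subseteq> ten"
    "\<forall>x\<in>ten. petersen_involution (petersen_involution x) = x"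
    "\<forall>e\<in>petersen_edges. petersen_involution ` e \<in> petersen_edges"
    by (simp_all add: petersen_involution_def ten_eq petersen_edges_def insert_commute)
  then show ?thesis
    unfolding X_edges_twisted by (intro graph_iso_kc_twisted_edges simple_graph_petersen)
qed

lemma graph_iso_kc_petersen_desargues:
  "graph_iso (kc_verts ten) (kc_edges petersen_edges) (gp_verts 10) (gp_edges 10 3)"
proof -
  have "graph_iso (kc_verts (gp_verts 5)) (kc_edges (gp_edges 5 2)) (gp_verts 10) (gp_edges 10 7)"
    using graph_iso_kc_gp_odd[of 5 2] by simp
  moreover have "gp_edges 10 7 = gp_edges 10 3" using gp_edges_reflect[of 3 10] by simp
  ultimately show ?thesis
    using graph_iso_trans[OF graph_iso_kc[OF graph_iso_petersen_gp_5_2]] by simp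
qed

theorem mainTheorem5:
  shows "simple_graph ten petersen_edges \<and> simple_graph ten X_edges
    \<and> graph_iso (kc_verts ten) (kc_edges petersen_edges) (gp_verts 10) (gp_edges 10 3)
    \<and> graph_iso (kc_verts ten) (kc_edges X_edges) (gp_verts 10) (gp_edges 10 3)
    \<and> \<not> graph_iso ten X_edges ten petersen_edges"
proof (intro conjI)
  show "graph_iso (kc_verts ten) (kc_edges X_edges) (gp_verts 10) (gp_edges 10 3)"
    using graph_iso_kc_X_petersen graph_iso_kc_petersen_desargues by (rule graph_iso_trans)
  show "\<not> graph_iso ten X_edges ten petersen_edges"
    using graph_iso_triangle_free triangle_free_petersen not_triangle_free_X by blast
qed (fact simple_graph_petersen simple_graph_X graph_iso_kc_petersen_desargues)+

end
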